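(* Consider the following discrete-time process on three times $r=0<s<t$. The environment at time $r=0$ is in a correlated bipartite state $\eta_{\mathcal{E}_s\mathcal{E}_t}$ (with two parts, one labelled by each later time step), and the system is initially uncorrelated with the environment. Between times $r$ and $s$ the system interacts only with environment part $\mathcal{E}_s$ via the swap unitary $\mathbf{S}_{\mathcal{S}\mathcal{E}_s}$ (where $\mathbf{S}\ket{ij}=\ket{ji}$), and between times $s$ and $t$ the system interacts only with environment part $\mathcal{E}_t$ via the swap unitary $\mathbf{S}_{\mathcal{S}\mathcal{E}_t}$; each environment part is discarded after its interaction. Then the process is operationally CP-divisible, i.e. $\Lambda_{t:r}=\Lambda_{t:s}\circ\Lambda_{s:r}$, where each $\Lambda_{y:x}$ is the experimentally reconstructed map obtained by preparing a fresh system state at $x$ (after discarding the system there) and measuring at $y$. Nonetheless the process is non-Markovian: if the experimenter stores the system state at time $s_{-}$, inserts a fresh (independent) system state at $s_{+}$, lets the dynamics continue to $t$ and stores that output too, the resulting joint state $\rho_{st}$ is exactly the correlated initial environment state $\eta_{\mathcal{E}_s\mathcal{E}_t}$, so it is correlated even though the states inserted at times $r$ and $s_{+}$ were independent.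
   Context: Setting: a finite-dimensional quantum system coupled to an environment, with system–environment unitary dynamics between times. Operational CP (oCP) divisibility: for any $t>s>r$, $\Lambda_{t:r}=\Lambda_{t:s}\circ\Lambda_{s:r}$, where $\Lambda_{t:s}[\rho_s]=\operatorname{tr}_\mathcal{E}[\mathcal{U}_{t:s}(\rho_s\otimes\eta_s)]$ is reconstructed by discarding the system at $s_{-}$, preparing a fresh state $\rho_s$ at $s_{+}$, and measuring at $t$; $\eta_s$ is the reduced environment state at $s$. A process is Markovian iff its process tensor has product form $T=L_{t:s}\otimes L_{s:r}$ (Choi states of the intermediate maps); any correlation between outputs produced from independent inputs signals memory. *)

theory Defs
  imports Complex_Main
begin

text \<open>Finite-dimensional operators on a finite index type 'i, represented by
their matrix entries in the computational basis.\<close>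
type_synonym 'i op = "'i \<Rightarrow> 'i \<Rightarrow> complex"

definition tr :: "('i::finite) op \<Rightarrow> complex" where
  "tr A = (\<Sum>i\<in>UNIV. A i i)"

definition positive_op :: "('i::finite) op \<Rightarrow> bool" where
  "positive_op A \<longleftrightarrow> (\<forall>v::'i \<Rightarrow> complex.
     let q = (\<Sum>i\<in>UNIV. \<Sum>j\<in>UNIV. cnj (v i) * A i j * v j) in Im q = 0 \<and> Re q \<ge> 0)"

definition density :: "('i::finite) op \<Rightarrow> bool" where
  "density A \<longleftrightarrow> positive_op A \<and> tr A = 1"

definition idm :: "'i op" where
  "idm i j = (if i = j then 1 else 0)"

definition tensor :: "'a op \<Rightarrow> 'b op \<Rightarrow> ('a \<times> 'b) op" where
  "tensor A B = (\<lambda>(a, b) (a', b'). A a a' * B b b')"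

definition ptrace2 :: "('a \<times> 'b::finite) op \<Rightarrow> 'a op" where
  "ptrace2 C = (\<lambda>a a'. \<Sum>b\<in>UNIV. C (a, b) (a', b))"

definition ptrace1 :: "('a::finite \<times> 'b) op \<Rightarrow> 'b op" where
  "ptrace1 C = (\<lambda>b b'. \<Sum>a\<in>UNIV. C (a, b) (a, b'))"

definition conjU :: "('i::finite) op \<Rightarrow> 'i op \<Rightarrow> 'i op" where
  "conjU U C = (\<lambda>x y. \<Sum>a\<in>UNIV. \<Sum>b\<in>UNIV. U x a * C a b * cnj (U y b))"

definition swapU :: "('d \<times> 'd) op" where
  "swapU = (\<lambda>(i, j) (k, l). if i = l \<and> j = k then 1 else 0)"

text \<open>Joint space ordering S x (E_s x E_t).  Swap of S with E_s, identity on E_t.\<close>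
definition U1 :: "('d \<times> ('d \<times> 'd)) op" where
  "U1 = (\<lambda>(s, es, et) (s', es', et'). swapU (s, es) (s', es') * idm et et')"

text \<open>State of S x E_t at time s_- (after the first swap, E_s discarded),
  for initial system state rho and initial environment state eta on E_s x E_t.\<close>
definition state_s :: "('d::finite) op \<Rightarrow> ('d \<times> 'd) op \<Rightarrow> ('d \<times> 'd) op" where
  "state_s rho eta =
     (let X = conjU U1 (tensor rho eta)
      in (\<lambda>(s, et) (s', et'). \<Sum>es\<in>UNIV. X (s, es, et) (s', es, et')))"

definition Lam_sr :: "('d::finite \<times> 'd) op \<Rightarrow> 'd op \<Rightarrow> 'd op" where
  "Lam_sr eta rho = ptrace2 (state_s rho eta)"

definition Lam_tr :: "('d::finite \<times> 'd) op \<Rightarrow> 'd op \<Rightarrow> 'd op" where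
  "Lam_tr eta rho = ptrace2 (conjU swapU (state_s rho eta))"

text \<open>reduced environment state eta_s at time s (actual process with initial system state rho0)\<close>
definition eta_s :: "('d::finite \<times> 'd) op \<Rightarrow> 'd op \<Rightarrow> 'd op" where
  "eta_s eta rho0 = ptrace1 (state_s rho0 eta)"

definition Lam_ts :: "('d::finite \<times> 'd) op \<Rightarrow> 'd op \<Rightarrow> 'd op \<Rightarrow> 'd op" where
  "Lam_ts eta rho0 sigma = ptrace2 (conjU swapU (tensor sigma (eta_s eta rho0)))"

text \<open>Joint output rho_st: the system at s_- is stored in a memory M, a fresh state
  sigma is inserted at s_+, the second swap (S with E_t) acts, E_t is discarded.
  Ordering of the joint space: M x (S x E_t); result on M x S.\<close>
definition rho_st :: "('d::finite \<times> 'd) op \<Rightarrow> 'd op \<Rightarrow> 'd op \<Rightarrow> ('d \<times> 'd) op" where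
  "rho_st eta rho sigma =
     (let Y = state_s rho eta;
          J = (\<lambda>(m, s, et) (m', s', et'). Y (m, et) (m', et') * sigma s s');
          U3 = (\<lambda>(m, x) (m', x'). idm m m' * swapU x x');
          Z = conjU U3 J
      in (\<lambda>(m, s) (m', s'). \<Sum>et\<in>UNIV. Z (m, s, et) (m', s', et)))"

definition product_state :: "('a \<times> 'b) op \<Rightarrow> bool" where
  "product_state C \<longleftrightarrow> (\<exists>A B. C = tensor A B)"

end

theory Submission
  imports Defs
begin

text \<open>Each swap moves one environment part into the system and the system into a part that
  is discarded afterwards. Hence the system at \<open>s\<^sub>-\<close> is the marginal of \<open>\<eta>\<close> on \<open>E\<^sub>s\<close> and
  the system at \<open>t\<close> is its marginal on \<open>E\<^sub>t\<close>, whatever states were prepared: both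
  \<open>\<Lambda>\<^sub>t\<^sub>:\<^sub>r\<close> and \<open>\<Lambda>\<^sub>t\<^sub>:\<^sub>s \<circ> \<Lambda>\<^sub>s\<^sub>:\<^sub>r\<close> are the constant map onto the \<open>E\<^sub>t\<close>-marginal. Storing the
  two outputs instead of discarding one of them reproduces \<open>\<eta>\<close> itself, correlations
  included.\<close>

lemma conjU_permutation:
  fixes U :: "('i::finite) op"
  assumes "\<And>x a. U x a = of_bool (a = f x)"
  shows "conjU U C x y = C (f x) (f y)"
proof -
  have "cnj (of_bool p) = (of_bool p :: complex)" for p
    by simp
  then have "(\<Sum>b\<in>UNIV. c * C a b * cnj (U y b)) = c * C a (f y)" for a c
    by (simp add: assms mult.assoc flip: sum_distrib_left)
  then show ?thesis
    by (simp add: conjU_def assms)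
qed

lemma conjU_swapU: "conjU swapU C (a, b) (a', b') = C (b, a) (b', a')"
proof -
  have "swapU x y = of_bool (y = (snd x, fst x))" for x y :: "'a \<times> 'a"
    by (cases x; cases y) (auto simp: swapU_def)
  then show ?thesis
    by (simp add: conjU_permutation[where U = swapU])
qed

lemma conjU_U1: "conjU U1 C (s, es, et) (s', es', et') = C (es, s, et) (es', s', et')"
proof -
  have "U1 x y = of_bool (y = (fst (snd x), fst x, snd (snd x)))" for x y :: "'a \<times> 'a \<times> 'a"
    by (cases x; cases y) (auto simp: U1_def swapU_def idm_def)
  then show ?thesis
    by (simp add: conjU_permutation[where U = U1])
qed

lemma ptrace2_conjU_swapU: "ptrace2 (conjU swapU C) = ptrace1 C"
  by (simp add: ptrace1_def ptrace2_def conjU_swapU)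

lemma ptrace1_tensor: "ptrace1 (tensor A B) = (\<lambda>b b'. tr A * B b b')"
  by (simp add: ptrace1_def tensor_def tr_def sum_distrib_right)

lemma tr_ptrace2: "tr (ptrace2 (C :: ('a::finite \<times> 'b::finite) op)) = tr C"
  unfolding tr_def ptrace2_def
  by (simp add: sum.cartesian_product case_prod_beta' flip: UNIV_Times_UNIV)

lemma state_s_eq:
  assumes "tr rho = 1"
  shows "state_s rho eta = eta"
proof (intro ext)
  fix p q :: "'a \<times> 'a"
  obtain s et s' et' where pq: "p = (s, et)" "q = (s', et')"
    by fastforce
  have "state_s rho eta p q = tr rho * eta p q"
    unfolding pq state_s_def Let_def
    by (simp add: conjU_U1 tensor_def tr_def sum_distrib_right)
  then show "state_s rho eta p q = eta p q"
    using assms by simp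
qed

lemma Lam_sr_eq: "tr rho = 1 \<Longrightarrow> Lam_sr eta rho = ptrace2 eta"
  by (simp add: Lam_sr_def state_s_eq)

lemma Lam_tr_eq: "tr rho = 1 \<Longrightarrow> Lam_tr eta rho = ptrace1 eta"
  by (simp add: Lam_tr_def state_s_eq ptrace2_conjU_swapU)

lemma Lam_ts_eq:
  assumes "tr rho0 = 1"
  shows "Lam_ts eta rho0 sigma = (\<lambda>a b. tr sigma * ptrace1 eta a b)"
  using assms by (simp add: Lam_ts_def eta_s_def state_s_eq ptrace2_conjU_swapU ptrace1_tensor)

lemma rho_st_eq:
  assumes "tr rho = 1" and "tr sigma = 1"
  shows "rho_st eta rho sigma = eta"
proof (intro ext)
  fix p q :: "'a \<times> 'a"
  obtain m s m' s' where pq: "p = (m, s)" "q = (m', s')"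
    by fastforce
  let ?U3 = "\<lambda>(m, x) (m', x'). idm m m' * swapU x x' :: complex"
  have "?U3 x y = of_bool (y = (fst x, snd (snd x), fst (snd x)))"
    for x y :: "'a \<times> 'a \<times> 'a"
    by (cases x; cases y) (auto simp: swapU_def idm_def)
  from conjU_permutation[OF this]
  have "rho_st eta rho sigma p q = eta p q * tr sigma"
    unfolding pq rho_st_def Let_def state_s_eq[OF assms(1)]
    by (simp add: tr_def sum_distrib_left)
  then show "rho_st eta rho sigma p q = eta p q"
    using assms(2) by simp
qed

theorem mainTheorem2:
  fixes eta :: "('d::finite \<times> 'd) op"
    and rho0 rho sigma :: "'d op"
  assumes "density eta" and "density rho0" and "density rho" and "density sigma"
  shows "Lam_tr eta rho = Lam_ts eta rho0 (Lam_sr eta rho)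
         \<and> rho_st eta rho sigma = eta
         \<and> (\<not> product_state eta \<longrightarrow> \<not> product_state (rho_st eta rho sigma))"
proof -
  have tr_one: "tr eta = 1" "tr rho0 = 1" "tr rho = 1" "tr sigma = 1"
    using assms by (simp_all add: density_def)
  have "Lam_ts eta rho0 (Lam_sr eta rho) = ptrace1 eta"
    using tr_one by (simp add: Lam_ts_eq Lam_sr_eq tr_ptrace2)
  moreover have "rho_st eta rho sigma = eta"
    using tr_one by (simp add: rho_st_eq)
  ultimately show ?thesis
    using tr_one by (simp add: Lam_tr_eq)
qed

end
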